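(* Let $\alpha\in\ell^2$ and $\epsilon>0$, and suppose that the $(\epsilon,L)$-sequence associated with $\alpha$ and $\epsilon$ has finite length $N$. Then $a_{2N+2}(R_\alpha)\le\epsilon/\sqrt2$.
   Context: $\mathbb{N}=\{0,1,2,\dots\}$; $\ell^2$ is the space of square-summable functions $\mathbb{N}\to\mathbb{C}$; $(R_\alpha f)(k)=\alpha_k\sum_{j=0}^kf(j)$. Approximation numbers: $a_{n+1}(T)=\inf\{\|T-P\|:P$ linear on $\ell^2$ with rank $\le n\}$, $\|\cdot\|$ the operator norm. For a finite natural interval $I$: $\mu(I)=\sum_{k\in I}|\alpha_k|^2$, $\|f\|_{2,I}=(\sum_{k\in I}|f(k)|^2)^{1/2}$, $l(I,f)=\sum_{k\in I}\sum_{n\in I\setminus\{k\}}|\alpha_k\alpha_n\sum_{j=\min(k,n)+1}^{\max(k,n)}f(j)|^2$, $L(I)=(\sup_{\|f\|_{2,I}\le1}l(I,f)/\mu(I))^{1/2}$ (sup over $f$ supported in $I$; $L(I)=0$ if $\alpha$ vanishes on $I$). $(\epsilon,L)$-sequence: $c_0=0$ and $c_{k+1}=\inf\{t\in\mathbb{N}:t>c_k,\ L([c_k,t-1])>\epsilon\}$ (with $\inf\emptyset=+\infty$). It has finite length $N$ if $c_N<\infty$ and $c_{N+1}=+\infty$. *)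

theory Defs
  imports "HOL-Analysis.Analysis" "HOL-Library.Extended_Nat"
begin

definition l2 :: "(nat \<Rightarrow> complex) set" where
  "l2 = {f. summable (\<lambda>k. (cmod (f k))\<^sup>2)}"

definition l2norm :: "(nat \<Rightarrow> complex) \<Rightarrow> real" where
  "l2norm f = sqrt (\<Sum>k. (cmod (f k))\<^sup>2)"

definition R_op :: "(nat \<Rightarrow> complex) \<Rightarrow> (nat \<Rightarrow> complex) \<Rightarrow> (nat \<Rightarrow> complex)" where
  "R_op \<alpha> f = (\<lambda>k. \<alpha> k * (\<Sum>j\<le>k. f j))"

definition op_norm :: "((nat \<Rightarrow> complex) \<Rightarrow> (nat \<Rightarrow> complex)) \<Rightarrow> ereal" where
  "op_norm T = (SUP f\<in>{f\<in>l2. l2norm f \<le> 1}.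
      (if T f \<in> l2 then ereal (l2norm (T f)) else \<infinity>))"

definition l2_linear :: "((nat \<Rightarrow> complex) \<Rightarrow> (nat \<Rightarrow> complex)) \<Rightarrow> bool" where
  "l2_linear P \<longleftrightarrow> (\<forall>f\<in>l2. P f \<in> l2) \<and>
     (\<forall>f\<in>l2. \<forall>g\<in>l2. P (\<lambda>k. f k + g k) = (\<lambda>k. P f k + P g k)) \<and>
     (\<forall>c. \<forall>f\<in>l2. P (\<lambda>k. c * f k) = (\<lambda>k. c * P f k))"

definition rank_le :: "((nat \<Rightarrow> complex) \<Rightarrow> (nat \<Rightarrow> complex)) \<Rightarrow> nat \<Rightarrow> bool" where
  "rank_le P n \<longleftrightarrow> (\<exists>b :: nat \<Rightarrow> (nat \<Rightarrow> complex).
      \<forall>f\<in>l2. \<exists>c :: nat \<Rightarrow> complex. P f = (\<lambda>k. \<Sum>i<n. c i * b i k))"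

text \<open>Approximation numbers: approx_num m T = a_m(T) for m >= 1, i.e.
  a_(n+1)(T) = inf { norm(T - P) : P linear on l2, rank P <= n }.\<close>

definition approx_num :: "nat \<Rightarrow> ((nat \<Rightarrow> complex) \<Rightarrow> (nat \<Rightarrow> complex)) \<Rightarrow> ereal" where
  "approx_num m T = (INF P\<in>{P. l2_linear P \<and> rank_le P (m - 1)}. op_norm (\<lambda>f k. T f k - P f k))"

definition mu :: "(nat \<Rightarrow> complex) \<Rightarrow> nat set \<Rightarrow> real" where
  "mu \<alpha> I = (\<Sum>k\<in>I. (cmod (\<alpha> k))\<^sup>2)"

definition norm2_on :: "nat set \<Rightarrow> (nat \<Rightarrow> complex) \<Rightarrow> real" where
  "norm2_on I f = sqrt (\<Sum>k\<in>I. (cmod (f k))\<^sup>2)"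

definition l_fun :: "(nat \<Rightarrow> complex) \<Rightarrow> nat set \<Rightarrow> (nat \<Rightarrow> complex) \<Rightarrow> real" where
  "l_fun \<alpha> I f = (\<Sum>k\<in>I. \<Sum>n\<in>I - {k}.
      (cmod (\<alpha> k * \<alpha> n * (\<Sum>j\<in>{min k n + 1..max k n}. f j)))\<^sup>2)"

definition L_fun :: "(nat \<Rightarrow> complex) \<Rightarrow> nat set \<Rightarrow> real" where
  "L_fun \<alpha> I = (if (\<forall>k\<in>I. \<alpha> k = 0) then 0 else
      sqrt (Sup {l_fun \<alpha> I f / mu \<alpha> I | f. (\<forall>k. k \<notin> I \<longrightarrow> f k = 0) \<and> norm2_on I f \<le> 1}))"

fun eps_L_seq :: "(nat \<Rightarrow> complex) \<Rightarrow> real \<Rightarrow> nat \<Rightarrow> enat" where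
  "eps_L_seq \<alpha> \<epsilon> 0 = 0"
| "eps_L_seq \<alpha> \<epsilon> (Suc k) =
     (if eps_L_seq \<alpha> \<epsilon> k = \<infinity> then \<infinity>
      else (let c = the_enat (eps_L_seq \<alpha> \<epsilon> k) in
        if (\<exists>t. t > c \<and> L_fun \<alpha> {c..t - 1} > \<epsilon>)
        then enat (LEAST t. t > c \<and> L_fun \<alpha> {c..t - 1} > \<epsilon>)
        else \<infinity>))"

definition has_finite_length :: "(nat \<Rightarrow> complex) \<Rightarrow> real \<Rightarrow> nat \<Rightarrow> bool" where
  "has_finite_length \<alpha> \<epsilon> N \<longleftrightarrow> eps_L_seq \<alpha> \<epsilon> N < \<infinity> \<and> eps_L_seq \<alpha> \<epsilon> (Suc N) = \<infinity>"

end

theory Submission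
  imports Defs
begin

text \<open>Cut \<open>\<nat>\<close> into consecutive blocks \<open>I\<close> and approximate \<open>(R\<^sub>\<alpha> f)(k) = \<alpha>\<^sub>k F\<^sub>k\<close>,
  where \<open>F\<^sub>k = f(0) + \<dots> + f(k)\<close>, on each block by \<open>\<alpha>\<^sub>k c\<^sub>I\<close>, with \<open>c\<^sub>I\<close> the
  \<open>|\<alpha>|\<^sup>2\<close>-weighted mean of the \<open>F\<^sub>k\<close> over \<open>I\<close>; this operator has rank at most the
  number of blocks. By the weighted variance identity the squared error on a finite block
  is \<open>l(I,f) / (2 \<mu>(I))\<close>, at most \<open>L(I)\<^sup>2 / 2\<close> times \<open>\<Sum>\<^sub>k\<^sub>\<in>\<^sub>I |f(k)|\<^sup>2\<close>, and on an
  infinite tail all of whose initial segments satisfy \<open>L \<le> \<epsilon>\<close> the same bound holds in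
  the limit. The \<open>(\<epsilon>,L)\<close>-sequence of length \<open>N\<close> yields such a partition into \<open>2N\<close>
  finite blocks and a tail, so summing over the blocks gives \<open>\<parallel>R\<^sub>\<alpha> - P\<parallel> \<le> \<epsilon>/\<surd>2\<close>
  with \<open>rank P \<le> 2N + 1\<close>.\<close>

definition psum :: "(nat \<Rightarrow> complex) \<Rightarrow> nat \<Rightarrow> complex" where
  "psum f k = (\<Sum>j\<le>k. f j)"

definition weight :: "(nat \<Rightarrow> complex) \<Rightarrow> nat \<Rightarrow> real" where
  "weight \<alpha> k = (cmod (\<alpha> k))\<^sup>2"

lemma weight_nonneg [simp]: "0 \<le> weight \<alpha> k"
  by (simp add: weight_def)

lemma mu_eq_sum_weight: "mu \<alpha> I = (\<Sum>k\<in>I. weight \<alpha> k)"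
  by (simp add: mu_def weight_def)

lemma mu_nonneg: "0 \<le> mu \<alpha> I"
  by (simp add: mu_def sum_nonneg)

lemma mu_pos_iff:
  assumes "finite I"
  shows "0 < mu \<alpha> I \<longleftrightarrow> (\<exists>k\<in>I. \<alpha> k \<noteq> 0)"
  using assms by (simp add: mu_def less_le sum_nonneg sum_nonneg_eq_0_iff)

lemma psum_add: "psum (\<lambda>k. f k + g k) n = psum f n + psum g n"
  unfolding psum_def by (simp add: sum.distrib)

lemma psum_mult: "psum (\<lambda>k. c * f k) n = c * psum f n"
  unfolding psum_def by (simp add: sum_distrib_left)

lemma psum_diff:
  assumes "k \<le> n"
  shows "(\<Sum>j\<in>{Suc k..n}. f j) = psum f n - psum f k"
proof -
  have "psum f m = sum f {0..<Suc m}" for m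
    unfolding psum_def by (simp add: atLeast0LessThan lessThan_Suc_atMost)
  moreover have "{Suc k..n} = {Suc k..<Suc n}" by auto
  ultimately show ?thesis using sum_diff_nat_ivl[of 0 "Suc k" "Suc n" f] assms by simp
qed

lemma norm_sum_between_eq_norm_psum_diff:
  "cmod (\<Sum>j\<in>{Suc (min k n)..max k n}. f j) = cmod (psum f k - psum f n)"
  using psum_diff[of k n f] psum_diff[of n k f]
  by (cases "k \<le> n") (simp_all add: norm_minus_commute)

lemma l_fun_eq:
  assumes "finite I"
  shows "l_fun \<alpha> I f = (\<Sum>k\<in>I. \<Sum>n\<in>I. weight \<alpha> k * weight \<alpha> n * (cmod (psum f k - psum f n))\<^sup>2)"
  unfolding l_fun_def
proof (rule sum.cong [OF refl])
  fix k assume "k \<in> I"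
  have "(\<Sum>n\<in>I - {k}. (cmod (\<alpha> k * \<alpha> n * (\<Sum>j\<in>{min k n + 1..max k n}. f j)))\<^sup>2)
      = (\<Sum>n\<in>I - {k}. weight \<alpha> k * weight \<alpha> n * (cmod (psum f k - psum f n))\<^sup>2)"
    by (intro sum.cong refl)
      (simp add: norm_mult power_mult_distrib norm_sum_between_eq_norm_psum_diff weight_def)
  also have "\<dots> = (\<Sum>n\<in>I. weight \<alpha> k * weight \<alpha> n * (cmod (psum f k - psum f n))\<^sup>2)"
    using sum.remove [OF assms \<open>k \<in> I\<close>,
        of "\<lambda>n. weight \<alpha> k * weight \<alpha> n * (cmod (psum f k - psum f n))\<^sup>2"]
    by simp
  finally show "(\<Sum>n\<in>I - {k}. (cmod (\<alpha> k * \<alpha> n * (\<Sum>j\<in>{min k n + 1..max k n}. f j)))\<^sup>2)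
      = (\<Sum>n\<in>I. weight \<alpha> k * weight \<alpha> n * (cmod (psum f k - psum f n))\<^sup>2)" .
qed

lemma l_fun_mult: "l_fun \<alpha> I (\<lambda>j. c * f j) = (cmod c)\<^sup>2 * l_fun \<alpha> I f"
proof -
  have "(cmod (\<alpha> k * \<alpha> n * (\<Sum>j\<in>J. c * f j)))\<^sup>2 = (cmod c)\<^sup>2 * (cmod (\<alpha> k * \<alpha> n * (\<Sum>j\<in>J. f j)))\<^sup>2"
    for k n and J :: "nat set"
    by (simp add: sum_distrib_left [symmetric] norm_mult power_mult_distrib)
  then show ?thesis
    unfolding l_fun_def by (simp add: sum_distrib_left)
qed

lemma l_fun_restrict:
  "l_fun \<alpha> {a..<b} f = l_fun \<alpha> {a..<b} (\<lambda>j. if j \<in> {a..<b} then f j else 0)"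
  unfolding l_fun_def
proof (intro sum.cong refl)
  fix k n assume "k \<in> {a..<b}" "n \<in> {a..<b} - {k}"
  then have "(\<Sum>j\<in>{min k n + 1..max k n}. f j)
      = (\<Sum>j\<in>{min k n + 1..max k n}. if j \<in> {a..<b} then f j else 0)"
    by (intro sum.cong) auto
  then show "(cmod (\<alpha> k * \<alpha> n * (\<Sum>j\<in>{min k n + 1..max k n}. f j)))\<^sup>2 =
      (cmod (\<alpha> k * \<alpha> n * (\<Sum>j\<in>{min k n + 1..max k n}. if j \<in> {a..<b} then f j else 0)))\<^sup>2"
    by simp
qed

lemma norm2_on_mult: "norm2_on I (\<lambda>j. c * f j) = cmod c * norm2_on I f"
  unfolding norm2_on_def
  by (simp add: norm_mult power_mult_distrib sum_distrib_left [symmetric] real_sqrt_mult)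

lemma l_fun_le_on_unit_ball:
  assumes "\<forall>k. k \<notin> {a..<b} \<longrightarrow> f k = 0" and "norm2_on {a..<b} f \<le> 1"
  shows "l_fun \<alpha> {a..<b} f \<le> (\<Sum>k\<in>{a..<b}. \<Sum>n\<in>{a..<b} - {k}. (cmod (\<alpha> k * \<alpha> n) * real b)\<^sup>2)"
  unfolding l_fun_def
proof (intro sum_mono)
  fix k n assume k: "k \<in> {a..<b}" and n: "n \<in> {a..<b} - {k}"
  have f_le_1: "cmod (f j) \<le> 1" for j
  proof (cases "j \<in> {a..<b}")
    case True
    have "(cmod (f j))\<^sup>2 \<le> (\<Sum>i\<in>{a..<b}. (cmod (f i))\<^sup>2)"
      by (rule member_le_sum [OF True]) auto
    also have "\<dots> = (norm2_on {a..<b} f)\<^sup>2"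
      unfolding norm2_on_def by (simp add: sum_nonneg)
    also have "\<dots> \<le> 1"
      using assms(2) unfolding norm2_on_def by (simp add: sum_nonneg)
    finally show ?thesis by (simp add: power_le_one_iff)
  qed (use assms(1) in simp)
  have "cmod (\<Sum>j\<in>{min k n + 1..max k n}. f j) \<le> (\<Sum>j\<in>{min k n + 1..max k n}. cmod (f j))"
    by (rule norm_sum)
  also have "\<dots> \<le> of_nat (card {min k n + 1..max k n}) * 1"
    by (rule sum_bounded_above) (use f_le_1 in auto)
  also have "\<dots> \<le> real b" using k n by auto
  finally have "cmod (\<alpha> k * \<alpha> n * (\<Sum>j\<in>{min k n + 1..max k n}. f j)) \<le> cmod (\<alpha> k * \<alpha> n) * real b"
    unfolding norm_mult [of "\<alpha> k * \<alpha> n"] by (rule mult_left_mono) simp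
  then show "(cmod (\<alpha> k * \<alpha> n * (\<Sum>j\<in>{min k n + 1..max k n}. f j)))\<^sup>2
      \<le> (cmod (\<alpha> k * \<alpha> n) * real b)\<^sup>2"
    by (rule power_mono) simp
qed

lemma bdd_above_l_fun_unit_ball:
  "bdd_above {l_fun \<alpha> {a..<b} f / mu \<alpha> {a..<b} | f.
    (\<forall>k. k \<notin> {a..<b} \<longrightarrow> f k = 0) \<and> norm2_on {a..<b} f \<le> 1}"
proof (rule bdd_aboveI)
  fix x assume "x \<in> {l_fun \<alpha> {a..<b} f / mu \<alpha> {a..<b} | f.
    (\<forall>k. k \<notin> {a..<b} \<longrightarrow> f k = 0) \<and> norm2_on {a..<b} f \<le> 1}"
  then obtain g where x: "x = l_fun \<alpha> {a..<b} g / mu \<alpha> {a..<b}"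
    and g: "\<forall>k. k \<notin> {a..<b} \<longrightarrow> g k = 0" "norm2_on {a..<b} g \<le> 1"
    by blast
  from g have "l_fun \<alpha> {a..<b} g \<le> (\<Sum>k\<in>{a..<b}. \<Sum>n\<in>{a..<b} - {k}. (cmod (\<alpha> k * \<alpha> n) * real b)\<^sup>2)"
    by (rule l_fun_le_on_unit_ball)
  from this mu_nonneg
  show "x \<le> (\<Sum>k\<in>{a..<b}. \<Sum>n\<in>{a..<b} - {k}. (cmod (\<alpha> k * \<alpha> n) * real b)\<^sup>2) / mu \<alpha> {a..<b}"
    unfolding x by (rule divide_right_mono)
qed

lemma l_fun_le_on_unit_ball_if_L_fun_le:
  assumes "L_fun \<alpha> {a..<b} \<le> e"
    and "\<forall>k. k \<notin> {a..<b} \<longrightarrow> f k = 0" and "norm2_on {a..<b} f \<le> 1"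
  shows "l_fun \<alpha> {a..<b} f \<le> e\<^sup>2 * mu \<alpha> {a..<b}"
proof (cases "\<forall>k\<in>{a..<b}. \<alpha> k = 0")
  case True
  then have "l_fun \<alpha> {a..<b} f = 0"
    unfolding l_fun_def by (intro sum.neutral ballI) simp
  then show ?thesis by (simp add: mu_def sum_nonneg)
next
  case False
  define S where "S = {l_fun \<alpha> {a..<b} f / mu \<alpha> {a..<b} | f.
    (\<forall>k. k \<notin> {a..<b} \<longrightarrow> f k = 0) \<and> norm2_on {a..<b} f \<le> 1}"
  have mu_pos: "0 < mu \<alpha> {a..<b}" using False by (subst mu_pos_iff) auto
  have "sqrt (Sup S) \<le> e"
    using assms(1) unfolding L_fun_def S_def if_not_P [OF False] .
  have "bdd_above S"
    unfolding S_def by (rule bdd_above_l_fun_unit_ball)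
  moreover have "0 \<in> S"
    unfolding S_def by (rule CollectI, rule exI [of _ "\<lambda>_. 0"]) (simp add: l_fun_def norm2_on_def)
  moreover have "l_fun \<alpha> {a..<b} f / mu \<alpha> {a..<b} \<in> S"
    unfolding S_def using assms(2,3) by blast
  ultimately have "0 \<le> Sup S" and "l_fun \<alpha> {a..<b} f / mu \<alpha> {a..<b} \<le> Sup S"
    by (auto intro: cSup_upper)
  moreover have "Sup S \<le> e\<^sup>2"
  proof -
    have "Sup S = (sqrt (Sup S))\<^sup>2" using \<open>0 \<le> Sup S\<close> by simp
    also have "\<dots> \<le> e\<^sup>2" using \<open>sqrt (Sup S) \<le> e\<close> \<open>0 \<le> Sup S\<close> by (intro power_mono) simp_all
    finally show ?thesis .
  qed
  ultimately show ?thesis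
    using mu_pos by (simp add: pos_divide_le_eq) (metis mult_right_mono less_imp_le order_trans)
qed

text \<open>The homogeneous form of \<open>L(I) \<le> e\<close>: no supremum, and no support or norm
  constraint on \<open>f\<close>.\<close>

definition l_bounded :: "(nat \<Rightarrow> complex) \<Rightarrow> real \<Rightarrow> nat set \<Rightarrow> bool" where
  "l_bounded \<alpha> e I \<longleftrightarrow> (\<forall>f. l_fun \<alpha> I f \<le> e\<^sup>2 * mu \<alpha> I * (\<Sum>k\<in>I. (cmod (f k))\<^sup>2))"

lemma l_bounded_subsingleton:
  assumes "I \<subseteq> {a}"
  shows "l_bounded \<alpha> e I"
proof -
  have "l_fun \<alpha> I f = 0" for f
    unfolding l_fun_def using assms by (intro sum.neutral ballI) auto
  then show ?thesis
    unfolding l_bounded_def by (simp add: mu_def sum_nonneg)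
qed

lemma l_bounded_if_L_fun_le:
  assumes "L_fun \<alpha> {a..<b} \<le> e"
  shows "l_bounded \<alpha> e {a..<b}"
  unfolding l_bounded_def
proof
  fix f :: "nat \<Rightarrow> complex"
  define I where "I = {a..<b}"
  define g where "g = (\<lambda>j. if j \<in> I then f j else 0)"
  define \<nu> where "\<nu> = norm2_on I f"
  have \<nu>_sq: "\<nu>\<^sup>2 = (\<Sum>k\<in>I. (cmod (f k))\<^sup>2)" and \<nu>_nonneg: "0 \<le> \<nu>"
    unfolding \<nu>_def norm2_on_def by (simp_all add: sum_nonneg)
  have "l_fun \<alpha> I g \<le> e\<^sup>2 * mu \<alpha> I * \<nu>\<^sup>2"
  proof (cases "\<nu> = 0")
    case True
    then have "g = (\<lambda>_. 0)"
      using \<nu>_sq unfolding g_def I_def by (auto simp: sum_nonneg_eq_0_iff)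
    then show ?thesis using True by (simp add: l_fun_def)
  next
    case False
    define h where "h = (\<lambda>j. inverse (of_real \<nu>) * g j)"
    have "norm2_on I g = \<nu>"
      unfolding \<nu>_def norm2_on_def g_def by (simp cong: sum.cong)
    then have "norm2_on I h = 1"
      unfolding h_def norm2_on_mult using False \<nu>_nonneg by (simp add: norm_inverse)
    then have "norm2_on I h \<le> 1" by simp
    moreover have "\<forall>k. k \<notin> I \<longrightarrow> h k = 0" unfolding h_def g_def by simp
    ultimately have "l_fun \<alpha> I h \<le> e\<^sup>2 * mu \<alpha> I"
      using assms unfolding I_def by (intro l_fun_le_on_unit_ball_if_L_fun_le)
    then have "\<nu>\<^sup>2 * l_fun \<alpha> I h \<le> \<nu>\<^sup>2 * (e\<^sup>2 * mu \<alpha> I)"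
      by (rule mult_left_mono) simp
    moreover have "l_fun \<alpha> I g = \<nu>\<^sup>2 * l_fun \<alpha> I h"
      unfolding h_def l_fun_mult using False by (simp add: norm_inverse power_inverse)
    ultimately show ?thesis by (simp add: mult_ac)
  qed
  then show "l_fun \<alpha> {a..<b} f \<le> e\<^sup>2 * mu \<alpha> {a..<b} * (\<Sum>k\<in>{a..<b}. (cmod (f k))\<^sup>2)"
    unfolding g_def I_def \<nu>_sq [unfolded I_def] l_fun_restrict [of \<alpha> a b f, symmetric] .
qed

lemma l_bounded_atLeastLessThan:
  assumes "\<And>t. a < t \<Longrightarrow> t \<le> b \<Longrightarrow> L_fun \<alpha> {a..t - 1} \<le> e"
  shows "l_bounded \<alpha> e {a..<b}"
proof (cases "a < b")
  case True
  then have "{a..b - 1} = {a..<b}" by auto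
  then show ?thesis using assms [OF True order_refl] by (simp add: l_bounded_if_L_fun_le)
qed (auto intro: l_bounded_subsingleton [of _ a])

section \<open>Weighted means on a finite block\<close>

lemma weighted_variance_identity_real:
  fixes w y :: "nat \<Rightarrow> real"
  shows "2 * (\<Sum>k\<in>I. w k) * (\<Sum>k\<in>I. w k * (y k)\<^sup>2) =
    (\<Sum>k\<in>I. \<Sum>n\<in>I. w k * w n * (y k - y n)\<^sup>2) + 2 * (\<Sum>n\<in>I. w n * y n)\<^sup>2"
proof -
  have "w k * w n * (y k - y n)\<^sup>2
      = w n * (w k * (y k)\<^sup>2) + w k * (w n * (y n)\<^sup>2) - 2 * ((w k * y k) * (w n * y n))" for k n
    by (simp add: power2_eq_square algebra_simps)
  then have "(\<Sum>k\<in>I. \<Sum>n\<in>I. w k * w n * (y k - y n)\<^sup>2)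
      = (\<Sum>k\<in>I. \<Sum>n\<in>I. w n * (w k * (y k)\<^sup>2)) + (\<Sum>k\<in>I. \<Sum>n\<in>I. w k * (w n * (y n)\<^sup>2))
        - 2 * (\<Sum>k\<in>I. \<Sum>n\<in>I. (w k * y k) * (w n * y n))"
    by (simp only: sum.distrib sum_subtractf sum_distrib_left)
  also have "(\<Sum>k\<in>I. \<Sum>n\<in>I. w n * (w k * (y k)\<^sup>2)) = (\<Sum>k\<in>I. w k) * (\<Sum>k\<in>I. w k * (y k)\<^sup>2)"
    by (simp add: sum_product) (rule sum.swap)
  also have "(\<Sum>k\<in>I. \<Sum>n\<in>I. w k * (w n * (y n)\<^sup>2)) = (\<Sum>k\<in>I. w k) * (\<Sum>k\<in>I. w k * (y k)\<^sup>2)"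
    by (simp add: sum_product)
  also have "(\<Sum>k\<in>I. \<Sum>n\<in>I. (w k * y k) * (w n * y n)) = (\<Sum>n\<in>I. w n * y n)\<^sup>2"
    by (simp add: sum_product power2_eq_square)
  finally show ?thesis by simp
qed

lemma weighted_variance_identity:
  fixes y :: "nat \<Rightarrow> complex" and w :: "nat \<Rightarrow> real"
  shows "2 * (\<Sum>k\<in>I. w k) * (\<Sum>k\<in>I. w k * (cmod (y k))\<^sup>2) =
    (\<Sum>k\<in>I. \<Sum>n\<in>I. w k * w n * (cmod (y k - y n))\<^sup>2) + 2 * (cmod (\<Sum>n\<in>I. of_real (w n) * y n))\<^sup>2"
proof -
  have "Re (\<Sum>n\<in>I. of_real (w n) * y n) = (\<Sum>n\<in>I. w n * Re (y n))"
    and "Im (\<Sum>n\<in>I. of_real (w n) * y n) = (\<Sum>n\<in>I. w n * Im (y n))"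
    by (simp_all add: Re_sum Im_sum)
  then show ?thesis
    using weighted_variance_identity_real [where I = I and w = w and y = "\<lambda>k. Re (y k)"]
      weighted_variance_identity_real [where I = I and w = w and y = "\<lambda>k. Im (y k)"]
    by (simp add: cmod_power2 algebra_simps sum.distrib)
qed

lemma l_bounded_deviation_le:
  assumes "finite I" and "l_bounded \<alpha> e I"
  shows "(\<Sum>k\<in>I. weight \<alpha> k * (cmod (psum f k - c))\<^sup>2)
    \<le> e\<^sup>2 / 2 * (\<Sum>k\<in>I. (cmod (f k))\<^sup>2)
      + (cmod (\<Sum>n\<in>I. of_real (weight \<alpha> n) * (psum f n - c)))\<^sup>2 / mu \<alpha> I"
proof (cases "mu \<alpha> I = 0")
  case True
  then have "\<forall>k\<in>I. weight \<alpha> k = 0"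
    using assms(1) by (simp add: mu_eq_sum_weight sum_nonneg_eq_0_iff)
  then show ?thesis by (simp add: sum_nonneg)
next
  case False
  then have mu_pos: "0 < mu \<alpha> I"
    using mu_nonneg [of \<alpha> I] by simp
  define Z where "Z = (cmod (\<Sum>n\<in>I. of_real (weight \<alpha> n) * (psum f n - c)))\<^sup>2"
  have "2 * mu \<alpha> I * (\<Sum>k\<in>I. weight \<alpha> k * (cmod (psum f k - c))\<^sup>2)
      = (\<Sum>k\<in>I. \<Sum>n\<in>I. weight \<alpha> k * weight \<alpha> n * (cmod ((psum f k - c) - (psum f n - c)))\<^sup>2) + 2 * Z"
    unfolding mu_eq_sum_weight Z_def by (rule weighted_variance_identity)
  also have "\<dots> = l_fun \<alpha> I f + 2 * Z"
    by (simp add: l_fun_eq [OF assms(1)])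
  also have "\<dots> \<le> e\<^sup>2 * mu \<alpha> I * (\<Sum>k\<in>I. (cmod (f k))\<^sup>2) + 2 * Z"
    using assms(2) unfolding l_bounded_def by simp
  finally show ?thesis
    using mu_pos unfolding Z_def by (simp add: field_simps)
qed

definition wmean :: "(nat \<Rightarrow> complex) \<Rightarrow> nat set \<Rightarrow> (nat \<Rightarrow> complex) \<Rightarrow> complex" where
  "wmean \<alpha> I f = (\<Sum>n\<in>I. of_real (weight \<alpha> n) * psum f n) / of_real (mu \<alpha> I)"

lemma wmean_add: "wmean \<alpha> I (\<lambda>k. f k + g k) = wmean \<alpha> I f + wmean \<alpha> I g"
  unfolding wmean_def by (simp add: psum_add distrib_left sum.distrib add_divide_distrib)

lemma wmean_mult: "wmean \<alpha> I (\<lambda>k. c * f k) = c * wmean \<alpha> I f"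
  unfolding wmean_def by (simp add: psum_mult sum_distrib_left mult.left_commute)

lemma l_bounded_deviation_from_wmean_le:
  assumes "finite I" and "l_bounded \<alpha> e I"
  shows "(\<Sum>k\<in>I. weight \<alpha> k * (cmod (psum f k - wmean \<alpha> I f))\<^sup>2)
    \<le> e\<^sup>2 / 2 * (\<Sum>k\<in>I. (cmod (f k))\<^sup>2)"
proof -
  have "(\<Sum>n\<in>I. of_real (weight \<alpha> n) * (psum f n - wmean \<alpha> I f))
      = (\<Sum>n\<in>I. of_real (weight \<alpha> n) * psum f n) - of_real (mu \<alpha> I) * wmean \<alpha> I f"
    by (simp add: algebra_simps sum_subtractf sum_distrib_left mu_eq_sum_weight)
  \<comment> \<open>If \<open>\<mu>(I) = 0\<close>, the excess term vanishes only because \<open>x / 0 = 0\<close>.\<close>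
  then have excess_zero:
    "(cmod (\<Sum>n\<in>I. of_real (weight \<alpha> n) * (psum f n - wmean \<alpha> I f)))\<^sup>2 / mu \<alpha> I = 0"
    by (cases "mu \<alpha> I = 0") (simp_all add: wmean_def)
  show ?thesis
    using l_bounded_deviation_le [OF assms, of f "wmean \<alpha> I f"] unfolding excess_zero by simp
qed

section \<open>The tail block\<close>

definition tail_weight :: "(nat \<Rightarrow> complex) \<Rightarrow> nat \<Rightarrow> real" where
  "tail_weight \<alpha> a = (\<Sum>n. if a \<le> n then weight \<alpha> n else 0)"

definition tail_mean :: "(nat \<Rightarrow> complex) \<Rightarrow> nat \<Rightarrow> (nat \<Rightarrow> complex) \<Rightarrow> complex" where
  "tail_mean \<alpha> a f =
    (\<Sum>n. if a \<le> n then of_real (weight \<alpha> n) * psum f n else 0) / of_real (tail_weight \<alpha> a)"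

lemma sum_lessThan_if_le:
  fixes h :: "nat \<Rightarrow> 'a::comm_monoid_add"
  shows "(\<Sum>n<m. if a \<le> n then h n else 0) = (\<Sum>n\<in>{a..<m}. h n)"
proof -
  have "(\<Sum>n<m. if a \<le> n then h n else 0) = sum h {n\<in>{..<m}. a \<le> n}"
    by (rule sum.inter_filter [symmetric]) simp
  also have "{n\<in>{..<m}. a \<le> n} = {a..<m}" by auto
  finally show ?thesis .
qed

lemma summable_tail_weight: "\<alpha> \<in> l2 \<Longrightarrow> summable (\<lambda>n. if a \<le> n then weight \<alpha> n else 0)"
  unfolding l2_def weight_def by (rule summable_comparison_test' [where N = 0]) auto

lemma sum_weight_le_tail_weight:
  assumes "\<alpha> \<in> l2"
  shows "(\<Sum>k\<in>{a..<b}. weight \<alpha> k) \<le> tail_weight \<alpha> a"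
  using sum_le_suminf [OF summable_tail_weight [OF assms], of "{..<b}"]
  by (simp add: tail_weight_def sum_lessThan_if_le)

lemma tail_weight_nonneg: "\<alpha> \<in> l2 \<Longrightarrow> 0 \<le> tail_weight \<alpha> a"
  unfolding tail_weight_def by (rule suminf_nonneg [OF summable_tail_weight]) auto

lemma weight_mult_deviation_le_l_fun:
  assumes "finite I" and "k \<in> I"
  shows "weight \<alpha> k * (\<Sum>n\<in>I. weight \<alpha> n * (cmod (psum f n - psum f k))\<^sup>2) \<le> l_fun \<alpha> I f"
proof -
  have "weight \<alpha> k * (\<Sum>n\<in>I. weight \<alpha> n * (cmod (psum f n - psum f k))\<^sup>2)
      = (\<Sum>n\<in>I. weight \<alpha> k * weight \<alpha> n * (cmod (psum f k - psum f n))\<^sup>2)"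
    by (simp add: sum_distrib_left norm_minus_commute mult.assoc)
  also have "\<dots> \<le> l_fun \<alpha> I f"
    unfolding l_fun_eq [OF assms(1)]
    by (rule member_le_sum [OF assms(2)]) (use assms(1) in \<open>auto intro!: sum_nonneg\<close>)
  finally show ?thesis .
qed

text \<open>Summability is not automatic, since the partial sums of a square-summable sequence may grow
  like \<open>\<surd>n\<close>; the \<open>l\<close>-bounds on the initial segments of the tail control their spread
  around the single value \<open>psum f k\<^sub>0\<close>.\<close>

lemma summable_tail_deviation:
  assumes "\<alpha> \<in> l2" and "\<And>b. l_bounded \<alpha> e {a..<b}" and "f \<in> l2"
    and "a \<le> k\<^sub>0" and "\<alpha> k\<^sub>0 \<noteq> 0"
  shows "summable (\<lambda>n. if a \<le> n then weight \<alpha> n * (cmod (psum f n - psum f k\<^sub>0))\<^sup>2 else 0)"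
proof -
  define d where "d n = weight \<alpha> n * (cmod (psum f n - psum f k\<^sub>0))\<^sup>2" for n
  define B where "B = e\<^sup>2 * tail_weight \<alpha> a * (\<Sum>n. (cmod (f n))\<^sup>2) / weight \<alpha> k\<^sub>0"
  have w\<^sub>0_pos: "0 < weight \<alpha> k\<^sub>0" using assms(5) by (simp add: weight_def)
  have sf: "summable (\<lambda>n. (cmod (f n))\<^sup>2)" using assms(3) unfolding l2_def by simp
  have d_sum_le: "(\<Sum>n\<in>{a..<b}. d n) \<le> B" if "k\<^sub>0 < b" for b
  proof -
    have "weight \<alpha> k\<^sub>0 * (\<Sum>n\<in>{a..<b}. d n) \<le> l_fun \<alpha> {a..<b} f"
      unfolding d_def using assms(4) that by (intro weight_mult_deviation_le_l_fun) auto
    also have "\<dots> \<le> e\<^sup>2 * mu \<alpha> {a..<b} * (\<Sum>k\<in>{a..<b}. (cmod (f k))\<^sup>2)"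
      using assms(2) unfolding l_bounded_def by blast
    also have "\<dots> \<le> e\<^sup>2 * tail_weight \<alpha> a * (\<Sum>n. (cmod (f n))\<^sup>2)"
    proof (intro mult_mono mult_left_mono)
      show "mu \<alpha> {a..<b} \<le> tail_weight \<alpha> a"
        unfolding mu_eq_sum_weight by (rule sum_weight_le_tail_weight [OF assms(1)])
      have "(\<Sum>k\<in>{a..<b}. (cmod (f k))\<^sup>2) \<le> (\<Sum>k<b. (cmod (f k))\<^sup>2)"
        by (rule sum_mono2) auto
      also have "\<dots> \<le> (\<Sum>n. (cmod (f n))\<^sup>2)"
        by (rule sum_le_suminf [OF sf]) auto
      finally show "(\<Sum>k\<in>{a..<b}. (cmod (f k))\<^sup>2) \<le> (\<Sum>n. (cmod (f n))\<^sup>2)" .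
      show "0 \<le> e\<^sup>2 * tail_weight \<alpha> a"
        using tail_weight_nonneg [OF assms(1)] by simp
    qed (simp_all add: mu_nonneg sum_nonneg)
    finally show ?thesis
      unfolding B_def using w\<^sub>0_pos by (simp add: field_simps)
  qed
  show ?thesis
    unfolding d_def [symmetric]
  proof (rule summableI_nonneg_bounded [where x = B])
    fix m
    have "(\<Sum>n<m. if a \<le> n then d n else 0) \<le> (\<Sum>n\<in>{a..<max m (Suc k\<^sub>0)}. d n)"
      unfolding sum_lessThan_if_le by (rule sum_mono2) (auto simp: d_def)
    also have "\<dots> \<le> B" by (rule d_sum_le) simp
    finally show "(\<Sum>n<m. if a \<le> n then d n else 0) \<le> B" .
  qed (simp add: d_def)
qed

lemma summable_tail_moment:
  assumes "\<alpha> \<in> l2" and "\<And>b. l_bounded \<alpha> e {a..<b}" and "f \<in> l2"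
  shows "summable (\<lambda>n. if a \<le> n then of_real (weight \<alpha> n) * psum f n else 0)"
proof (cases "\<forall>n\<ge>a. \<alpha> n = 0")
  case True
  then show ?thesis by (simp add: weight_def cong: if_cong)
next
  case False
  then obtain k\<^sub>0 where k\<^sub>0: "a \<le> k\<^sub>0" "\<alpha> k\<^sub>0 \<noteq> 0" by auto
  define d where "d n = weight \<alpha> n * (cmod (psum f n - psum f k\<^sub>0))\<^sup>2" for n
  have "summable (\<lambda>n. (if a \<le> n then weight \<alpha> n else 0) / 2 + (if a \<le> n then d n else 0) / 2
      + (if a \<le> n then weight \<alpha> n else 0) * cmod (psum f k\<^sub>0))"
    unfolding d_def
    by (intro summable_add summable_divide summable_mult2 summable_tail_weight [OF assms(1)]
        summable_tail_deviation [OF assms k\<^sub>0])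
  then show ?thesis
  proof (rule summable_comparison_test' [where N = 0])
    fix n
    \<comment> \<open>\<open>w |F\<^sub>n| \<le> w |F\<^sub>n - F\<^sub>k\<^sub>0| + w |F\<^sub>k\<^sub>0|\<close> and \<open>x \<le> (1 + x\<^sup>2) / 2\<close>\<close>
    have "weight \<alpha> n * cmod (psum f n)
        \<le> weight \<alpha> n / 2 + d n / 2 + weight \<alpha> n * cmod (psum f k\<^sub>0)"
    proof -
      define x where "x = cmod (psum f n - psum f k\<^sub>0)"
      have "cmod (psum f n) \<le> x + cmod (psum f k\<^sub>0)"
        unfolding x_def by (metis norm_triangle_sub add.commute)
      then have "weight \<alpha> n * cmod (psum f n) \<le> weight \<alpha> n * x + weight \<alpha> n * cmod (psum f k\<^sub>0)"
        by (metis distrib_left mult_left_mono weight_nonneg)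
      moreover have "weight \<alpha> n * x \<le> weight \<alpha> n / 2 + weight \<alpha> n * x\<^sup>2 / 2"
        using mult_left_mono [OF zero_le_power2 [of "x - 1"] weight_nonneg [of \<alpha> n]]
        by (simp add: power2_eq_square algebra_simps)
      ultimately show ?thesis unfolding d_def x_def by simp
    qed
    then show "norm (if a \<le> n then of_real (weight \<alpha> n) * psum f n else 0)
        \<le> (if a \<le> n then weight \<alpha> n else 0) / 2 + (if a \<le> n then d n else 0) / 2
          + (if a \<le> n then weight \<alpha> n else 0) * cmod (psum f k\<^sub>0)"
      by (simp add: norm_mult)
  qed
qed

lemma tail_excess_tendsto_zero:
  assumes "\<alpha> \<in> l2" and "\<And>b. l_bounded \<alpha> e {a..<b}" and "f \<in> l2"
  shows "(\<lambda>b. (cmod (\<Sum>n\<in>{a..<b}. of_real (weight \<alpha> n) * (psum f n - tail_mean \<alpha> a f)))\<^sup>2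
      / mu \<alpha> {a..<b}) \<longlonglongrightarrow> 0"
proof (cases "tail_weight \<alpha> a = 0")
  case True
  then have "\<forall>n. (if a \<le> n then weight \<alpha> n else 0) = 0"
    using suminf_eq_zero_iff [OF summable_tail_weight [OF assms(1)]]
    unfolding tail_weight_def by simp
  then have "mu \<alpha> {a..<b} = 0" for b
    unfolding mu_eq_sum_weight by (metis atLeastLessThan_iff sum.neutral)
  then show ?thesis by simp
next
  case False
  define S where "S = (\<Sum>n. if a \<le> n then of_real (weight \<alpha> n) * psum f n else (0::complex))"
  have "(\<Sum>n\<in>{a..<b}. of_real (weight \<alpha> n) * (psum f n - tail_mean \<alpha> a f))
      = (\<Sum>n<b. if a \<le> n then of_real (weight \<alpha> n) * psum f n else 0)
        - of_real (\<Sum>n<b. if a \<le> n then weight \<alpha> n else 0) * tail_mean \<alpha> a f" for b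
    by (simp add: sum_lessThan_if_le algebra_simps sum_subtractf sum_distrib_left)
  moreover have "mu \<alpha> {a..<b} = (\<Sum>n<b. if a \<le> n then weight \<alpha> n else 0)" for b
    by (simp add: mu_eq_sum_weight sum_lessThan_if_le)
  moreover have "(\<lambda>b. (cmod ((\<Sum>n<b. if a \<le> n then of_real (weight \<alpha> n) * psum f n else 0)
        - of_real (\<Sum>n<b. if a \<le> n then weight \<alpha> n else 0) * tail_mean \<alpha> a f))\<^sup>2
        / (\<Sum>n<b. if a \<le> n then weight \<alpha> n else 0))
      \<longlonglongrightarrow> (cmod (S - of_real (tail_weight \<alpha> a) * tail_mean \<alpha> a f))\<^sup>2 / tail_weight \<alpha> a"
    unfolding S_def tail_weight_def
    by (intro tendsto_intros summable_LIMSEQ summable_tail_moment [OF assms]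
        summable_tail_weight [OF assms(1)]) (use False in \<open>simp add: tail_weight_def\<close>)
  moreover have "S - of_real (tail_weight \<alpha> a) * tail_mean \<alpha> a f = 0"
    unfolding tail_mean_def S_def using False by simp
  ultimately show ?thesis by simp
qed

lemma tail_mean_add:
  assumes "\<alpha> \<in> l2" and "\<And>b. l_bounded \<alpha> e {a..<b}" and "f \<in> l2" and "g \<in> l2"
  shows "tail_mean \<alpha> a (\<lambda>k. f k + g k) = tail_mean \<alpha> a f + tail_mean \<alpha> a g"
proof -
  have "(\<lambda>n. if a \<le> n then of_real (weight \<alpha> n) * psum (\<lambda>k. f k + g k) n else 0)
      = (\<lambda>n. (if a \<le> n then of_real (weight \<alpha> n) * psum f n else 0)
          + (if a \<le> n then of_real (weight \<alpha> n) * psum g n else 0))"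
    by (auto simp: psum_add distrib_left)
  then show ?thesis
    unfolding tail_mean_def
    by (simp add: suminf_add [OF summable_tail_moment [OF assms(1,2,3)]
          summable_tail_moment [OF assms(1,2,4)], symmetric] add_divide_distrib)
qed

lemma tail_mean_mult:
  assumes "\<alpha> \<in> l2" and "\<And>b. l_bounded \<alpha> e {a..<b}" and "f \<in> l2"
  shows "tail_mean \<alpha> a (\<lambda>k. c * f k) = c * tail_mean \<alpha> a f"
proof -
  have "(\<lambda>n. if a \<le> n then of_real (weight \<alpha> n) * psum (\<lambda>k. c * f k) n else 0)
      = (\<lambda>n. c * (if a \<le> n then of_real (weight \<alpha> n) * psum f n else 0))"
    by (auto simp: psum_mult mult.left_commute)
  then show ?thesis
    unfolding tail_mean_def by (simp add: suminf_mult [OF summable_tail_moment [OF assms]])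
qed

section \<open>A finite-rank approximation of \<open>R\<^sub>\<alpha>\<close>\<close>

lemma op_norm_le:
  assumes "0 \<le> C"
    and "\<And>f. f \<in> l2 \<Longrightarrow> summable (\<lambda>k. (cmod (T f k))\<^sup>2)"
    and "\<And>f. f \<in> l2 \<Longrightarrow> (\<Sum>k. (cmod (T f k))\<^sup>2) \<le> C\<^sup>2 * (\<Sum>k. (cmod (f k))\<^sup>2)"
  shows "op_norm T \<le> ereal C"
  unfolding op_norm_def
proof (rule SUP_least)
  fix f assume "f \<in> {f \<in> l2. l2norm f \<le> 1}"
  then have f: "f \<in> l2" and "(\<Sum>k. (cmod (f k))\<^sup>2) \<le> 1"
    by (auto simp: l2norm_def)
  then have "C\<^sup>2 * (\<Sum>k. (cmod (f k))\<^sup>2) \<le> C\<^sup>2"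
    by (simp add: mult_left_le)
  with assms(3) [OF f] have "l2norm (T f) \<le> sqrt (C\<^sup>2)"
    unfolding l2norm_def by (intro real_sqrt_le_mono) simp
  moreover have "T f \<in> l2"
    using assms(2) [OF f] unfolding l2_def by simp
  ultimately show "(if T f \<in> l2 then ereal (l2norm (T f)) else \<infinity>) \<le> ereal C"
    using assms(1) by simp
qed

lemma approx_num_le_op_norm:
  assumes "l2_linear P" and "rank_le P n"
  shows "approx_num (Suc n) T \<le> op_norm (\<lambda>f k. T f k - P f k)"
  unfolding approx_num_def by (rule INF_lower) (use assms in simp)

lemma mono_le_of_le_add_tendsto_zero:
  fixes T \<delta> :: "nat \<Rightarrow> real"
  assumes "mono T" and "\<And>n. a \<le> n \<Longrightarrow> T n \<le> C + \<delta> n" and "\<delta> \<longlonglongrightarrow> 0"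
  shows "T m \<le> C"
proof -
  have "(\<lambda>n. C + \<delta> n) \<longlonglongrightarrow> C"
    using tendsto_add [OF tendsto_const assms(3)] by simp
  moreover have "T m \<le> C + \<delta> n" if "max a m \<le> n" for n
    using monoD [OF assms(1), of m n] assms(2) [of n] that by simp
  ultimately show ?thesis
    using LIMSEQ_le_const by blast
qed

lemma sum_lessThan_eq_sum_segments:
  fixes s :: "nat \<Rightarrow> nat"
  assumes "s 0 = 0" and "mono s"
  shows "(\<Sum>k<s m. h k) = (\<Sum>i<m. \<Sum>k\<in>{s i..<s (Suc i)}. h k)"
proof (induction m)
  case 0
  then show ?case using assms(1) by simp
next
  case (Suc m)
  have "(\<Sum>k<s (Suc m). h k) = (\<Sum>k\<in>{0..<s m}. h k) + (\<Sum>k\<in>{s m..<s (Suc m)}. h k)"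
    using sum.atLeastLessThan_concat [of 0 "s m" "s (Suc m)" h] monoD [OF assms(2), of m "Suc m"]
    by (simp add: atLeast0LessThan)
  then show ?case
    using Suc.IH by (simp add: atLeast0LessThan)
qed

locale l_bounded_partition =
  fixes \<alpha> :: "nat \<Rightarrow> complex" and e :: real and s :: "nat \<Rightarrow> nat" and M :: nat
  assumes alpha_l2: "\<alpha> \<in> l2"
    and s_0: "s 0 = 0" and s_mono: "mono s"
    and segment_l_bounded: "\<And>i. i < M \<Longrightarrow> l_bounded \<alpha> e {s i..<s (Suc i)}"
    and tail_l_bounded: "\<And>b. l_bounded \<alpha> e {s M..<b}"
begin

definition block :: "nat \<Rightarrow> nat set" where
  "block i = (if i < M then {s i..<s (Suc i)} else {s M..})"

definition block_coeff :: "nat \<Rightarrow> (nat \<Rightarrow> complex) \<Rightarrow> complex" where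
  "block_coeff i f = (if i < M then wmean \<alpha> (block i) f else tail_mean \<alpha> (s M) f)"

definition approx :: "(nat \<Rightarrow> complex) \<Rightarrow> nat \<Rightarrow> complex" where
  "approx f k = (\<Sum>i<Suc M. block_coeff i f * (if k \<in> block i then \<alpha> k else 0))"

lemma block_disjoint:
  assumes "i < Suc M" "j < Suc M" "k \<in> block i" "k \<in> block j"
  shows "i = j"
proof -
  have False if "i' < j'" "j' < Suc M" "k \<in> block i'" "k \<in> block j'" for i' j'
  proof -
    have "k < s (Suc i')" using that unfolding block_def by auto
    also have "s (Suc i') \<le> s j'" using that by (intro monoD [OF s_mono]) simp
    also have "s j' \<le> k" using that unfolding block_def by (auto split: if_splits simp: less_Suc_eq)
    finally show False by simp
  qed
  then show ?thesis using assms by (metis linorder_neqE_nat)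
qed

lemma approx_eq:
  assumes "i < Suc M" and "k \<in> block i"
  shows "approx f k = block_coeff i f * \<alpha> k"
proof -
  have "approx f k = (\<Sum>j<Suc M. if j = i then block_coeff j f * \<alpha> k else 0)"
    unfolding approx_def
  proof (intro sum.cong refl)
    fix j assume "j \<in> {..<Suc M}"
    then have "k \<in> block j \<longleftrightarrow> j = i"
      using block_disjoint [of j i] assms by auto
    then show "block_coeff j f * (if k \<in> block j then \<alpha> k else 0)
        = (if j = i then block_coeff j f * \<alpha> k else 0)"
      by simp
  qed
  then show ?thesis using assms(1) by simp
qed

lemma approx_error_eq:
  assumes "i < Suc M" and "k \<in> block i"
  shows "(cmod (R_op \<alpha> f k - approx f k))\<^sup>2 = weight \<alpha> k * (cmod (psum f k - block_coeff i f))\<^sup>2"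
proof -
  have "R_op \<alpha> f k - approx f k = \<alpha> k * (psum f k - block_coeff i f)"
    unfolding approx_eq [OF assms] R_op_def psum_def by (simp add: algebra_simps)
  then show ?thesis by (simp add: norm_mult power_mult_distrib weight_def)
qed

lemma approx_error_head_le:
  "(\<Sum>k<s M. (cmod (R_op \<alpha> f k - approx f k))\<^sup>2) \<le> e\<^sup>2 / 2 * (\<Sum>k<s M. (cmod (f k))\<^sup>2)"
proof -
  have "(\<Sum>k\<in>{s i..<s (Suc i)}. (cmod (R_op \<alpha> f k - approx f k))\<^sup>2)
      \<le> e\<^sup>2 / 2 * (\<Sum>k\<in>{s i..<s (Suc i)}. (cmod (f k))\<^sup>2)" if "i < M" for i
  proof -
    have "(\<Sum>k\<in>{s i..<s (Suc i)}. (cmod (R_op \<alpha> f k - approx f k))\<^sup>2)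
        = (\<Sum>k\<in>{s i..<s (Suc i)}. weight \<alpha> k * (cmod (psum f k - wmean \<alpha> {s i..<s (Suc i)} f))\<^sup>2)"
      using that by (intro sum.cong refl) (subst approx_error_eq [of i], auto simp: block_def block_coeff_def)
    also have "\<dots> \<le> e\<^sup>2 / 2 * (\<Sum>k\<in>{s i..<s (Suc i)}. (cmod (f k))\<^sup>2)"
      using that by (intro l_bounded_deviation_from_wmean_le segment_l_bounded) simp_all
    finally show ?thesis .
  qed
  then have "(\<Sum>i<M. \<Sum>k\<in>{s i..<s (Suc i)}. (cmod (R_op \<alpha> f k - approx f k))\<^sup>2)
      \<le> (\<Sum>i<M. e\<^sup>2 / 2 * (\<Sum>k\<in>{s i..<s (Suc i)}. (cmod (f k))\<^sup>2))"
    by (intro sum_mono) simp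
  then show ?thesis
    unfolding sum_lessThan_eq_sum_segments [OF s_0 s_mono, of _ M] sum_distrib_left [symmetric] .
qed

lemma approx_error_tail_le:
  "(\<Sum>k\<in>{s M..<b}. (cmod (R_op \<alpha> f k - approx f k))\<^sup>2)
    \<le> e\<^sup>2 / 2 * (\<Sum>k\<in>{s M..<b}. (cmod (f k))\<^sup>2)
      + (cmod (\<Sum>n\<in>{s M..<b}. of_real (weight \<alpha> n) * (psum f n - tail_mean \<alpha> (s M) f)))\<^sup>2
        / mu \<alpha> {s M..<b}"
proof -
  have "(\<Sum>k\<in>{s M..<b}. (cmod (R_op \<alpha> f k - approx f k))\<^sup>2)
      = (\<Sum>k\<in>{s M..<b}. weight \<alpha> k * (cmod (psum f k - tail_mean \<alpha> (s M) f))\<^sup>2)"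
    by (intro sum.cong refl) (simp add: approx_error_eq [of M] block_def block_coeff_def)
  also have "\<dots> \<le> e\<^sup>2 / 2 * (\<Sum>k\<in>{s M..<b}. (cmod (f k))\<^sup>2)
      + (cmod (\<Sum>n\<in>{s M..<b}. of_real (weight \<alpha> n) * (psum f n - tail_mean \<alpha> (s M) f)))\<^sup>2
        / mu \<alpha> {s M..<b}"
    by (intro l_bounded_deviation_le tail_l_bounded) simp
  finally show ?thesis .
qed

lemma approx_error_le:
  assumes "f \<in> l2"
  shows "summable (\<lambda>k. (cmod (R_op \<alpha> f k - approx f k))\<^sup>2)"
    and "(\<Sum>k. (cmod (R_op \<alpha> f k - approx f k))\<^sup>2) \<le> e\<^sup>2 / 2 * (\<Sum>k. (cmod (f k))\<^sup>2)"
proof -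
  define g where "g k = (cmod (R_op \<alpha> f k - approx f k))\<^sup>2" for k
  define \<delta> where "\<delta> b = (cmod (\<Sum>n\<in>{s M..<b}. of_real (weight \<alpha> n) * (psum f n - tail_mean \<alpha> (s M) f)))\<^sup>2
    / mu \<alpha> {s M..<b}" for b
  have sf: "summable (\<lambda>k. (cmod (f k))\<^sup>2)"
    using assms unfolding l2_def by simp
  have split: "(\<Sum>k<n. q k) = (\<Sum>k<s M. q k) + (\<Sum>k\<in>{s M..<n}. q k)"
    if "s M \<le> n" for n and q :: "nat \<Rightarrow> real"
    using sum.atLeastLessThan_concat [of 0 "s M" n q] that by (simp add: atLeast0LessThan)
  have partial_le_excess: "(\<Sum>k<n. g k) \<le> e\<^sup>2 / 2 * (\<Sum>k. (cmod (f k))\<^sup>2) + \<delta> n"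
    if "s M \<le> n" for n
  proof -
    have "(\<Sum>k<n. g k) \<le> e\<^sup>2 / 2 * (\<Sum>k<s M. (cmod (f k))\<^sup>2)
        + (e\<^sup>2 / 2 * (\<Sum>k\<in>{s M..<n}. (cmod (f k))\<^sup>2) + \<delta> n)"
      unfolding split [OF that] g_def \<delta>_def
      by (intro add_mono approx_error_head_le approx_error_tail_le)
    also have "\<dots> = e\<^sup>2 / 2 * (\<Sum>k<n. (cmod (f k))\<^sup>2) + \<delta> n"
      unfolding split [OF that] by (simp add: algebra_simps)
    also have "\<dots> \<le> e\<^sup>2 / 2 * (\<Sum>k. (cmod (f k))\<^sup>2) + \<delta> n"
      by (intro add_right_mono mult_left_mono sum_le_suminf sf) auto
    finally show ?thesis .
  qed
  have partial_mono: "mono (\<lambda>n. \<Sum>k<n. g k)"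
    unfolding mono_def g_def by (intro allI impI sum_mono2) auto
  have excess_tendsto: "\<delta> \<longlonglongrightarrow> 0"
    unfolding \<delta>_def by (rule tail_excess_tendsto_zero [OF alpha_l2 tail_l_bounded assms])
  have partial_le: "(\<Sum>k<n. g k) \<le> e\<^sup>2 / 2 * (\<Sum>k. (cmod (f k))\<^sup>2)" for n
    by (rule mono_le_of_le_add_tendsto_zero [OF partial_mono partial_le_excess excess_tendsto])
  show "summable g"
    by (rule summableI_nonneg_bounded [OF _ partial_le]) (simp add: g_def)
  then show "suminf g \<le> e\<^sup>2 / 2 * (\<Sum>k. (cmod (f k))\<^sup>2)"
    by (rule suminf_le_const [OF _ partial_le])
qed

lemma block_coeff_add:
  assumes "f \<in> l2" and "g \<in> l2"
  shows "block_coeff i (\<lambda>k. f k + g k) = block_coeff i f + block_coeff i g"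
  unfolding block_coeff_def
  using wmean_add tail_mean_add [OF alpha_l2 tail_l_bounded assms] by simp

lemma block_coeff_mult:
  assumes "f \<in> l2"
  shows "block_coeff i (\<lambda>k. c * f k) = c * block_coeff i f"
  unfolding block_coeff_def
  using wmean_mult tail_mean_mult [OF alpha_l2 tail_l_bounded assms] by simp

lemma approx_in_l2: "approx f \<in> l2"
proof -
  define K where "K = (\<Sum>i<Suc M. cmod (block_coeff i f))"
  have "summable (\<lambda>k. (cmod (approx f k))\<^sup>2)"
  proof (rule summable_comparison_test' [where N = 0])
    show "summable (\<lambda>k. K\<^sup>2 * (cmod (\<alpha> k))\<^sup>2)"
      using alpha_l2 unfolding l2_def by (intro summable_mult) simp
    fix k
    have "cmod (approx f k)
        \<le> (\<Sum>i<Suc M. cmod (block_coeff i f * (if k \<in> block i then \<alpha> k else 0)))"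
      unfolding approx_def by (rule norm_sum)
    also have "\<dots> \<le> (\<Sum>i<Suc M. cmod (block_coeff i f) * cmod (\<alpha> k))"
      by (intro sum_mono) (auto simp: norm_mult)
    also have "\<dots> = K * cmod (\<alpha> k)"
      unfolding K_def by (rule sum_distrib_right [symmetric])
    finally show "norm ((cmod (approx f k))\<^sup>2) \<le> K\<^sup>2 * (cmod (\<alpha> k))\<^sup>2"
      by (simp add: power_mono flip: power_mult_distrib)
  qed
  then show ?thesis unfolding l2_def by simp
qed

lemma approx_l2_linear: "l2_linear approx"
  unfolding l2_linear_def
proof (intro conjI ballI allI)
  fix f g :: "nat \<Rightarrow> complex"
  show "approx f \<in> l2" by (rule approx_in_l2)
  assume "f \<in> l2" and "g \<in> l2"
  then show "approx (\<lambda>k. f k + g k) = (\<lambda>k. approx f k + approx g k)"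
    unfolding approx_def by (simp add: block_coeff_add distrib_right sum.distrib)
next
  fix c and f :: "nat \<Rightarrow> complex"
  assume "f \<in> l2"
  then show "approx (\<lambda>k. c * f k) = (\<lambda>k. c * approx f k)"
    unfolding approx_def by (simp add: block_coeff_mult sum_distrib_left mult.assoc del: sum.lessThan_Suc)
qed

lemma approx_rank_le: "rank_le approx (Suc M)"
  unfolding rank_le_def
proof (intro exI [of _ "\<lambda>i k. if k \<in> block i then \<alpha> k else 0"] ballI)
  fix f :: "nat \<Rightarrow> complex"
  show "\<exists>c. approx f = (\<lambda>k. \<Sum>i<Suc M. c i * (if k \<in> block i then \<alpha> k else 0))"
    unfolding approx_def by (rule exI [of _ "\<lambda>i. block_coeff i f"]) simp
qed

theorem approx_num_R_op_le:
  assumes "0 \<le> e"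
  shows "approx_num (M + 2) (R_op \<alpha>) \<le> ereal (e / sqrt 2)"
proof -
  have "approx_num (Suc (Suc M)) (R_op \<alpha>) \<le> op_norm (\<lambda>f k. R_op \<alpha> f k - approx f k)"
    by (rule approx_num_le_op_norm [OF approx_l2_linear approx_rank_le])
  also have "\<dots> \<le> ereal (e / sqrt 2)"
    by (rule op_norm_le) (use assms approx_error_le in \<open>simp_all add: power_divide\<close>)
  finally show ?thesis by simp
qed

end

section \<open>The \<open>(\<epsilon>,L)\<close>-sequence\<close>

lemma eps_L_seq_infinite_mono:
  assumes "eps_L_seq \<alpha> \<epsilon> m = \<infinity>" and "m \<le> n"
  shows "eps_L_seq \<alpha> \<epsilon> n = \<infinity>"
proof -
  have "eps_L_seq \<alpha> \<epsilon> (m + d) = \<infinity>" for d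
    using assms(1) by (induction d) auto
  then show ?thesis
    using assms(2) by (metis le_add_diff_inverse)
qed

declare eps_L_seq.simps(2) [simp del]

definition eps_L_nat :: "(nat \<Rightarrow> complex) \<Rightarrow> real \<Rightarrow> nat \<Rightarrow> nat" where
  "eps_L_nat \<alpha> \<epsilon> m = the_enat (eps_L_seq \<alpha> \<epsilon> m)"

lemma eps_L_seq_Suc_eq:
  assumes "eps_L_seq \<alpha> \<epsilon> m \<noteq> \<infinity>"
  shows "eps_L_seq \<alpha> \<epsilon> (Suc m) =
    (if \<exists>t. eps_L_nat \<alpha> \<epsilon> m < t \<and> \<epsilon> < L_fun \<alpha> {eps_L_nat \<alpha> \<epsilon> m..t - 1}
     then enat (LEAST t. eps_L_nat \<alpha> \<epsilon> m < t \<and> \<epsilon> < L_fun \<alpha> {eps_L_nat \<alpha> \<epsilon> m..t - 1})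
     else \<infinity>)"
  unfolding eps_L_nat_def by (simp only: eps_L_seq.simps(2) if_not_P [OF assms] Let_def)

lemma eps_L_nat_gap:
  assumes "eps_L_seq \<alpha> \<epsilon> (Suc m) \<noteq> \<infinity>"
  shows "eps_L_nat \<alpha> \<epsilon> m < eps_L_nat \<alpha> \<epsilon> (Suc m)"
    and "\<And>t. eps_L_nat \<alpha> \<epsilon> m < t \<Longrightarrow> t < eps_L_nat \<alpha> \<epsilon> (Suc m)
      \<Longrightarrow> L_fun \<alpha> {eps_L_nat \<alpha> \<epsilon> m..t - 1} \<le> \<epsilon>"
proof -
  define P where "P t \<longleftrightarrow> eps_L_nat \<alpha> \<epsilon> m < t \<and> \<epsilon> < L_fun \<alpha> {eps_L_nat \<alpha> \<epsilon> m..t - 1}" for t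
  have "eps_L_seq \<alpha> \<epsilon> m \<noteq> \<infinity>"
  proof
    assume "eps_L_seq \<alpha> \<epsilon> m = \<infinity>"
    then have "eps_L_seq \<alpha> \<epsilon> (Suc m) = \<infinity>"
      by (rule eps_L_seq_infinite_mono) simp
    with assms show False ..
  qed
  then have step: "eps_L_seq \<alpha> \<epsilon> (Suc m) = (if \<exists>t. P t then enat (Least P) else \<infinity>)"
    unfolding P_def by (rule eps_L_seq_Suc_eq)
  have "\<exists>t. P t"
  proof (rule ccontr)
    assume "\<not> (\<exists>t. P t)"
    with step have "eps_L_seq \<alpha> \<epsilon> (Suc m) = \<infinity>" by (simp only: if_False)
    with assms show False ..
  qed
  with step have c_Suc: "eps_L_nat \<alpha> \<epsilon> (Suc m) = Least P"
    unfolding eps_L_nat_def by (simp only: if_True the_enat.simps)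
  show "eps_L_nat \<alpha> \<epsilon> m < eps_L_nat \<alpha> \<epsilon> (Suc m)"
    using LeastI_ex [OF \<open>\<exists>t. P t\<close>] unfolding c_Suc P_def by simp
  show "L_fun \<alpha> {eps_L_nat \<alpha> \<epsilon> m..t - 1} \<le> \<epsilon>"
    if "eps_L_nat \<alpha> \<epsilon> m < t" and "t < eps_L_nat \<alpha> \<epsilon> (Suc m)" for t
    using not_less_Least [of t P] that unfolding c_Suc P_def by auto
qed

lemma eps_L_nat_last:
  assumes "eps_L_seq \<alpha> \<epsilon> m \<noteq> \<infinity>" and "eps_L_seq \<alpha> \<epsilon> (Suc m) = \<infinity>"
    and "eps_L_nat \<alpha> \<epsilon> m < t"
  shows "L_fun \<alpha> {eps_L_nat \<alpha> \<epsilon> m..t - 1} \<le> \<epsilon>"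
proof (rule ccontr)
  assume "\<not> L_fun \<alpha> {eps_L_nat \<alpha> \<epsilon> m..t - 1} \<le> \<epsilon>"
  with assms(3) have "\<exists>t. eps_L_nat \<alpha> \<epsilon> m < t \<and> \<epsilon> < L_fun \<alpha> {eps_L_nat \<alpha> \<epsilon> m..t - 1}"
    by (auto simp: not_le)
  then have "eps_L_seq \<alpha> \<epsilon> (Suc m) \<noteq> \<infinity>"
    unfolding eps_L_seq_Suc_eq [OF assms(1)] by (simp only: if_True) simp
  with assms(2) show False by simp
qed

text \<open>Only \<open>[c\<^sub>m, c\<^sub>m\<^sub>+\<^sub>1 - 2]\<close> is known to satisfy \<open>L \<le> \<epsilon>\<close>, since
  \<open>L([c\<^sub>m, c\<^sub>m\<^sub>+\<^sub>1 - 1]) > \<epsilon>\<close>; the point \<open>c\<^sub>m\<^sub>+\<^sub>1 - 1\<close> forms a block of its own, on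
  which \<open>l\<close> vanishes.\<close>

definition eps_L_partition :: "(nat \<Rightarrow> complex) \<Rightarrow> real \<Rightarrow> nat \<Rightarrow> nat \<Rightarrow> nat" where
  "eps_L_partition \<alpha> \<epsilon> N i =
    (if 2 * N \<le> i then eps_L_nat \<alpha> \<epsilon> N
     else if even i then eps_L_nat \<alpha> \<epsilon> (i div 2)
     else eps_L_nat \<alpha> \<epsilon> (Suc (i div 2)) - 1)"

lemma eps_L_seq_finite_if_has_finite_length:
  assumes "has_finite_length \<alpha> \<epsilon> N" and "m \<le> N"
  shows "eps_L_seq \<alpha> \<epsilon> m \<noteq> \<infinity>"
proof
  assume "eps_L_seq \<alpha> \<epsilon> m = \<infinity>"
  then have "eps_L_seq \<alpha> \<epsilon> N = \<infinity>"
    using assms(2) by (rule eps_L_seq_infinite_mono)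
  with assms(1) show False
    unfolding has_finite_length_def by simp
qed

lemma less_double_cases:
  fixes i N :: nat
  assumes "i < 2 * N"
  obtains m where "m < N" and "i = 2 * m \<or> i = Suc (2 * m)"
proof (rule that [of "i div 2"])
  show "i div 2 < N" and "i = 2 * (i div 2) \<or> i = Suc (2 * (i div 2))"
    using assms by presburger+
qed

lemma eps_L_partition_even: "m < N \<Longrightarrow> eps_L_partition \<alpha> \<epsilon> N (2 * m) = eps_L_nat \<alpha> \<epsilon> m"
  by (simp add: eps_L_partition_def)

lemma eps_L_partition_odd:
  "m < N \<Longrightarrow> eps_L_partition \<alpha> \<epsilon> N (Suc (2 * m)) = eps_L_nat \<alpha> \<epsilon> (Suc m) - 1"
  by (simp add: eps_L_partition_def)

lemma eps_L_partition_Suc_odd: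
  "m < N \<Longrightarrow> eps_L_partition \<alpha> \<epsilon> N (Suc (Suc (2 * m))) = eps_L_nat \<alpha> \<epsilon> (Suc m)"
  by (cases "Suc m = N") (simp_all add: eps_L_partition_def)

lemma mono_eps_L_partition:
  assumes "has_finite_length \<alpha> \<epsilon> N"
  shows "mono (eps_L_partition \<alpha> \<epsilon> N)"
  unfolding mono_iff_le_Suc
proof
  fix i
  show "eps_L_partition \<alpha> \<epsilon> N i \<le> eps_L_partition \<alpha> \<epsilon> N (Suc i)"
  proof (cases "i < 2 * N")
    case True
    then obtain m where "m < N" and "i = 2 * m \<or> i = Suc (2 * m)"
      by (rule less_double_cases)
    moreover have "eps_L_nat \<alpha> \<epsilon> m < eps_L_nat \<alpha> \<epsilon> (Suc m)" if "m < N"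
      using that by (intro eps_L_nat_gap(1) eps_L_seq_finite_if_has_finite_length [OF assms]) simp
    ultimately show ?thesis
      by (auto simp: eps_L_partition_even eps_L_partition_odd eps_L_partition_Suc_odd)
  qed (simp add: eps_L_partition_def)
qed

lemma l_bounded_eps_L_partition_segment:
  assumes "has_finite_length \<alpha> \<epsilon> N" and "i < 2 * N"
  shows "l_bounded \<alpha> \<epsilon> {eps_L_partition \<alpha> \<epsilon> N i..<eps_L_partition \<alpha> \<epsilon> N (Suc i)}"
proof -
  obtain m where "m < N" and "i = 2 * m \<or> i = Suc (2 * m)"
    using assms(2) by (rule less_double_cases)
  then show ?thesis
  proof (elim disjE)
    assume "i = 2 * m"
    moreover have "eps_L_seq \<alpha> \<epsilon> (Suc m) \<noteq> \<infinity>"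
      using \<open>m < N\<close> by (intro eps_L_seq_finite_if_has_finite_length [OF assms(1)]) simp
    ultimately show ?thesis
      using \<open>m < N\<close> eps_L_nat_gap(2)
      by (auto simp: eps_L_partition_even eps_L_partition_odd intro!: l_bounded_atLeastLessThan)
  next
    assume "i = Suc (2 * m)"
    then show ?thesis
      using \<open>m < N\<close>
      by (intro l_bounded_subsingleton [of _ "eps_L_nat \<alpha> \<epsilon> (Suc m) - 1"])
        (auto simp: eps_L_partition_odd eps_L_partition_Suc_odd)
  qed
qed

lemma l_bounded_partition_eps_L_partition:
  assumes "\<alpha> \<in> l2" and "has_finite_length \<alpha> \<epsilon> N"
  shows "l_bounded_partition \<alpha> \<epsilon> (eps_L_partition \<alpha> \<epsilon> N) (2 * N)"
proof
  show "eps_L_partition \<alpha> \<epsilon> N 0 = 0"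
    unfolding eps_L_partition_def eps_L_nat_def by (simp add: zero_enat_def)
  show "l_bounded \<alpha> \<epsilon> {eps_L_partition \<alpha> \<epsilon> N (2 * N)..<b}" for b
    using assms(2) eps_L_nat_last [of \<alpha> \<epsilon> N] unfolding has_finite_length_def
    by (intro l_bounded_atLeastLessThan) (simp add: eps_L_partition_def)
qed (use assms mono_eps_L_partition l_bounded_eps_L_partition_segment in auto)

theorem lemma4p2:
  fixes \<alpha> :: "nat \<Rightarrow> complex" and \<epsilon> :: real and N :: nat
  assumes "\<alpha> \<in> l2" and "\<epsilon> > 0" and "has_finite_length \<alpha> \<epsilon> N"
  shows "approx_num (2 * N + 2) (R_op \<alpha>) \<le> ereal (\<epsilon> / sqrt 2)"
proof -
  interpret l_bounded_partition \<alpha> \<epsilon> "eps_L_partition \<alpha> \<epsilon> N" "2 * N"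
    using assms(1,3) by (rule l_bounded_partition_eps_L_partition)
  show ?thesis
    using approx_num_R_op_le assms(2) by simp
qed

end
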